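(* Let $G$ be a graph with exactly four vertices and $\operatorname{sdim}G=2$. Then $R_G\le\frac{\sqrt2}{2}$.
   Context: A unit-distance embedding of a graph $G$ in $\mathbb{R}^n$ is an injective map $f$ from the vertex set of $G$ to $\mathbb{R}^n$ such that $|f(u)-f(v)|=1$ for every edge $uv$ and no point $f(w)$ lies on the segment $[f(u),f(v)]$ for an edge $uv$ with $w\notin\{u,v\}$. $G$ admits a spherical embedding of dimension $k$ and radius $r$ if $G$ has a unit-distance embedding in $\mathbb{R}^k$ all of whose vertices lie on a sphere $\{x\in\mathbb{R}^k:|x-c|=r\}$. $\operatorname{sdim}G$ is the least $k$ such that $G$ admits a spherical embedding of dimension $k$ and some radius $r<1$. $R_G$ is the infimum of all $r<1$ such that $G$ admits a spherical embedding of dimension $\operatorname{sdim}G$ and radius $r$. *)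

theory Defs
  imports Complex_Main
begin

text \<open>Points of R^k are represented as functions nat => real vanishing at all
  coordinates i >= k (so the dimension k can vary inside a statement).\<close>

definition euclid :: "nat \<Rightarrow> (nat \<Rightarrow> real) set" where
  "euclid k = {x. \<forall>i\<ge>k. x i = 0}"

definition edist :: "nat \<Rightarrow> (nat \<Rightarrow> real) \<Rightarrow> (nat \<Rightarrow> real) \<Rightarrow> real" where
  "edist k x y = sqrt (\<Sum>i<k. (x i - y i)^2)"

definition seg :: "(nat \<Rightarrow> real) \<Rightarrow> (nat \<Rightarrow> real) \<Rightarrow> (nat \<Rightarrow> real) set" where
  "seg a b = {(\<lambda>i. (1 - t) * a i + t * b i) | t. 0 \<le> t \<and> t \<le> 1}"

definition unit_distance_embedding ::
  "'a set \<Rightarrow> ('a \<Rightarrow> 'a \<Rightarrow> bool) \<Rightarrow> nat \<Rightarrow> ('a \<Rightarrow> nat \<Rightarrow> real) \<Rightarrow> bool" where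
  "unit_distance_embedding V E k f \<longleftrightarrow>
     f ` V \<subseteq> euclid k \<and> inj_on f V \<and>
     (\<forall>u\<in>V. \<forall>v\<in>V. E u v \<longrightarrow> edist k (f u) (f v) = 1) \<and>
     (\<forall>u\<in>V. \<forall>v\<in>V. \<forall>w\<in>V. E u v \<and> w \<noteq> u \<and> w \<noteq> v \<longrightarrow> f w \<notin> seg (f u) (f v))"

definition spherical_embedding ::
  "'a set \<Rightarrow> ('a \<Rightarrow> 'a \<Rightarrow> bool) \<Rightarrow> nat \<Rightarrow> real \<Rightarrow> bool" where
  "spherical_embedding V E k r \<longleftrightarrow>
     (\<exists>f c. unit_distance_embedding V E k f \<and> c \<in> euclid k \<and>
            (\<forall>v\<in>V. edist k (f v) c = r))"

definition sdim :: "'a set \<Rightarrow> ('a \<Rightarrow> 'a \<Rightarrow> bool) \<Rightarrow> nat" where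
  "sdim V E = (LEAST k. \<exists>r<1. spherical_embedding V E k r)"

definition R_G :: "'a set \<Rightarrow> ('a \<Rightarrow> 'a \<Rightarrow> bool) \<Rightarrow> real" where
  "R_G V E = Inf {r. r < 1 \<and> spherical_embedding V E (sdim V E) r}"

end

theory Submission
  imports Defs
begin

text \<open>On a circle in the plane every vertex has at most two neighbours, because the
  unit circle around a vertex meets the circle through all vertices in at most two points.
  A graph on four vertices of maximum degree at most two either has an isolated vertex,
  and then lies in a triangle plus a point, embeddable on a circle of radius
  \<open>sqrt 3 / 3\<close>, or it is a subgraph of the 4-cycle, embeddable as a unit square on a
  circle of radius \<open>sqrt 2 / 2\<close>.\<close>

definition point2 :: "real \<Rightarrow> real \<Rightarrow> nat \<Rightarrow> real" where
  "point2 a b = (\<lambda>i. if i = 0 then a else if i = 1 then b else 0)"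

lemma edist_2: "edist 2 x y = sqrt ((x 0 - y 0)^2 + (x 1 - y 1)^2)"
  by (simp add: edist_def numeral_2_eq_2 lessThan_Suc)

lemma point2_in_euclid_2: "point2 a b \<in> euclid 2"
  by (simp add: point2_def euclid_def)

lemma point2_eq_iff: "point2 a b = point2 c d \<longleftrightarrow> a = c \<and> b = d"
  by (auto simp: point2_def fun_eq_iff)

lemma euclid_2_eqI:
  assumes "x \<in> euclid 2" "y \<in> euclid 2" "x 0 = y 0" "x 1 = y 1"
  shows "x = y"
proof
  fix i
  show "x i = y i"
    using assms by (cases "i < 2") (auto simp: euclid_def less_2_cases_iff)
qed

lemma point2_notin_seg_if_concyclic:
  assumes "a^2 + b^2 = R^2" "c^2 + d^2 = R^2" "x^2 + y^2 = R^2"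
    and "(x, y) \<noteq> (a, b)" "(x, y) \<noteq> (c, d)"
  shows "point2 x y \<notin> seg (point2 a b) (point2 c d)"
proof
  assume "point2 x y \<in> seg (point2 a b) (point2 c d)"
  then obtain t where t: "0 \<le> t" "t \<le> 1"
    "point2 x y = (\<lambda>i. (1 - t) * point2 a b i + t * point2 c d i)"
    unfolding seg_def by blast
  have x: "x = (1 - t) * a + t * c" using fun_cong[OF t(3), of 0] by (simp add: point2_def)
  have y: "y = (1 - t) * b + t * d" using fun_cong[OF t(3), of 1] by (simp add: point2_def)
  have "x^2 + y^2 = (1 - t) * (a^2 + b^2) + t * (c^2 + d^2) - t * (1 - t) * ((a - c)^2 + (b - d)^2)"
    unfolding x y by (simp add: power2_eq_square algebra_simps)
  with assms(1-3) have "t * (1 - t) * ((a - c)^2 + (b - d)^2) = 0"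
    by (simp add: algebra_simps)
  moreover have "(a - c)^2 + (b - d)^2 \<noteq> 0"
    using assms(4) x y by (auto simp: algebra_simps)
  ultimately have "t = 0 \<or> t = 1" by auto
  then show False using x y assms(4,5) by auto
qed

lemma spherical_embedding_2I:
  fixes X Y :: "'a \<Rightarrow> real"
  assumes on_circle: "\<forall>v\<in>V. X v ^2 + Y v ^2 = R^2" and "R \<ge> 0"
    and inj: "inj_on (\<lambda>v. (X v, Y v)) V"
    and unit: "\<forall>u\<in>V. \<forall>v\<in>V. E u v \<longrightarrow> (X u - X v)^2 + (Y u - Y v)^2 = 1"
  shows "spherical_embedding V E 2 R"
  unfolding spherical_embedding_def
proof (intro exI conjI)
  let ?f = "\<lambda>v. point2 (X v) (Y v)"
  show "point2 0 0 \<in> euclid 2" by (rule point2_in_euclid_2)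
  show "\<forall>v\<in>V. edist 2 (?f v) (point2 0 0) = R"
    using on_circle \<open>R \<ge> 0\<close> by (simp add: edist_2 point2_def)
  show "unit_distance_embedding V E 2 ?f"
    unfolding unit_distance_embedding_def
  proof (intro conjI ballI impI)
    show "?f ` V \<subseteq> euclid 2" using point2_in_euclid_2 by auto
    show "inj_on ?f V" using inj by (auto simp: inj_on_def point2_eq_iff)
    show "edist 2 (?f u) (?f v) = 1" if "u \<in> V" "v \<in> V" "E u v" for u v
      using unit that by (simp add: edist_2 point2_def)
    fix u v w assume uvw: "u \<in> V" "v \<in> V" "w \<in> V" "E u v \<and> w \<noteq> u \<and> w \<noteq> v"
    have "(X w, Y w) \<noteq> (X u, Y u)" "(X w, Y w) \<noteq> (X v, Y v)"
      using inj uvw by (auto simp: inj_on_def)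
    then show "?f w \<notin> seg (?f u) (?f v)"
      using point2_notin_seg_if_concyclic on_circle uvw by blast
  qed
qed

lemma spherical_embedding_subgraph_of_square:
  assumes "distinct [w0, w1, w2, w3]" and V: "V = {w0, w1, w2, w3}"
    and "\<not> E w0 w2" "\<not> E w2 w0" "\<not> E w1 w3" "\<not> E w3 w1"
    and "\<forall>v. \<not> E v v"
  shows "spherical_embedding V E 2 (sqrt 2 / 2)"
proof -
  define X where "X v = (if v = w0 \<or> v = w3 then 1/2 else - 1/2 :: real)" for v
  define Y where "Y v = (if v = w0 \<or> v = w1 then 1/2 else - 1/2 :: real)" for v
  have R: "(sqrt 2 / 2)^2 = 1/2" by (simp add: power_divide)
  show ?thesis
  proof (rule spherical_embedding_2I[where X = X and Y = Y])
    show "\<forall>v\<in>V. X v ^2 + Y v ^2 = (sqrt 2 / 2)^2"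
      unfolding R X_def Y_def by (auto simp: power2_eq_square)
    show "inj_on (\<lambda>v. (X v, Y v)) V"
      using assms unfolding X_def Y_def inj_on_def by auto
    show "\<forall>u\<in>V. \<forall>v\<in>V. E u v \<longrightarrow> (X u - X v)^2 + (Y u - Y v)^2 = 1"
      using assms unfolding V X_def Y_def by auto
  qed simp
qed

text \<open>The three non-isolated vertices go to an equilateral triangle with side 1 and
  the isolated one to the point antipodal to the first of them.\<close>

lemma spherical_embedding_triangle_plus_isolated:
  assumes "card V = 4" "w \<in> V" "\<forall>x. \<not> E w x \<and> \<not> E x w" "\<forall>v. \<not> E v v"
  shows "spherical_embedding V E 2 (sqrt 3 / 3)"
proof -
  have "card (V - {w}) = 3" using assms(1,2) by simp
  then obtain w0 w1 w2 where V': "V - {w} = {w0, w1, w2}" and "distinct [w0, w1, w2]"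
    by (auto simp: card_3_iff)
  then have V: "V = {w0, w1, w2, w}" and dist: "distinct [w0, w1, w2, w]"
    using assms(2) by auto
  define s where "s = sqrt (3::real)"
  have s: "s * s = 3" "s > 0" unfolding s_def by simp_all
  define X where "X v = (if v = w1 then 1/2 else if v = w2 then - 1/2 else 0 :: real)" for v
  define Y where "Y v = (if v = w0 then s/3 else if v = w then - s/3 else - s/6)" for v
  have R: "(s / 3)^2 = 1/3" using s by (simp add: power2_eq_square)
  show ?thesis unfolding s_def[symmetric]
  proof (rule spherical_embedding_2I[where X = X and Y = Y])
    show "\<forall>v\<in>V. X v ^2 + Y v ^2 = (s / 3)^2"
      unfolding R X_def Y_def using dist s by (auto simp: V power2_eq_square field_simps)
    show "inj_on (\<lambda>v. (X v, Y v)) V"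
      using dist s unfolding V X_def Y_def inj_on_def by auto
    show "\<forall>u\<in>V. \<forall>v\<in>V. E u v \<longrightarrow> (X u - X v)^2 + (Y u - Y v)^2 = 1"
      using dist assms(3,4) s unfolding V X_def Y_def by (auto simp: power2_eq_square field_simps)
  qed (use s in simp)
qed

lemma eq_if_same_dot_and_cross:
  fixes w1 w2 u1 u2 v1 v2 :: real
  assumes "w1^2 + w2^2 \<noteq> 0"
    and dot: "w1 * u1 + w2 * u2 = w1 * v1 + w2 * v2"
    and cross: "u2 * w1 - u1 * w2 = v2 * w1 - v1 * w2"
  shows "u1 = v1 \<and> u2 = v2"
proof -
  have "a1 * (w1^2 + w2^2) = (w1 * a1 + w2 * a2) * w1 - (a2 * w1 - a1 * w2) * w2"
       "a2 * (w1^2 + w2^2) = (w1 * a1 + w2 * a2) * w2 + (a2 * w1 - a1 * w2) * w1"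
    for a1 a2 :: real
    by (simp_all add: power2_eq_square algebra_simps)
  then have "u1 * (w1^2 + w2^2) = v1 * (w1^2 + w2^2)" "u2 * (w1^2 + w2^2) = v2 * (w1^2 + w2^2)"
    using dot cross by metis+
  with assms(1) show ?thesis by (metis mult_right_cancel)
qed

text \<open>A line meets a circle in at most two points: three vectors with equal length and
  equal inner product with \<open>w \<noteq> 0\<close> have equal cross products with \<open>w\<close> up to sign
  (Lagrange's identity), so two of them coincide.\<close>

lemma two_of_three_eq_if_same_norm_and_dot:
  fixes w1 w2 u1 u2 v1 v2 z1 z2 k q :: real
  assumes w: "w1^2 + w2^2 \<noteq> 0"
    and "w1 * u1 + w2 * u2 = k" "w1 * v1 + w2 * v2 = k" "w1 * z1 + w2 * z2 = k"
    and "u1^2 + u2^2 = q" "v1^2 + v2^2 = q" "z1^2 + z2^2 = q"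
  shows "(u1 = v1 \<and> u2 = v2) \<or> (u1 = z1 \<and> u2 = z2) \<or> (v1 = z1 \<and> v2 = z2)"
proof -
  have lagrange: "(a2 * w1 - a1 * w2)^2 = (a1^2 + a2^2) * (w1^2 + w2^2) - (w1 * a1 + w2 * a2)^2"
    for a1 a2 :: real
    by (simp add: power2_eq_square algebra_simps)
  have "(u2 * w1 - u1 * w2)^2 = (v2 * w1 - v1 * w2)^2"
       "(u2 * w1 - u1 * w2)^2 = (z2 * w1 - z1 * w2)^2"
    unfolding lagrange using assms by simp_all
  then have "u2 * w1 - u1 * w2 = v2 * w1 - v1 * w2 \<or> u2 * w1 - u1 * w2 = z2 * w1 - z1 * w2
      \<or> v2 * w1 - v1 * w2 = z2 * w1 - z1 * w2"
    by (auto simp: power2_eq_iff)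
  then show ?thesis using eq_if_same_dot_and_cross[OF w] assms by metis
qed

lemma dot_eq_if_concyclic_unit_distance:
  fixes p1 p2 q1 q2 r :: real
  assumes "p1^2 + p2^2 = r^2" "q1^2 + q2^2 = r^2" "(p1 - q1)^2 + (p2 - q2)^2 = 1"
  shows "p1 * q1 + p2 * q2 = (2 * r^2 - 1) / 2"
proof -
  have "(p1 - q1)^2 + (p2 - q2)^2 = (p1^2 + p2^2) + (q1^2 + q2^2) - 2 * (p1 * q1 + p2 * q2)"
    by (simp add: power2_eq_square algebra_simps)
  with assms show ?thesis by simp
qed

lemma unit_distance_embedding_on_circle_degree_le_2:
  assumes ude: "unit_distance_embedding V E 2 f"
    and sph: "\<forall>v\<in>V. edist 2 (f v) c = r"
    and vs: "v \<in> V" "x \<in> V" "y \<in> V" "z \<in> V"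
    and e: "E v x" "E v y" "E v z"
  shows "x = y \<or> x = z \<or> y = z"
proof -
  define p1 where "p1 a = f a 0 - c 0" for a
  define p2 where "p2 a = f a 1 - c 1" for a
  have fe: "f ` V \<subseteq> euclid 2" and inj: "inj_on f V"
    and unit: "\<And>a. a \<in> V \<Longrightarrow> E v a \<Longrightarrow> (p1 v - p1 a)^2 + (p2 v - p2 a)^2 = 1"
    using ude vs(1) unfolding unit_distance_embedding_def p1_def p2_def by (auto simp: edist_2)
  have "r \<ge> 0" using sph vs(1) by (auto simp: edist_2)
  then have circle: "\<And>a. a \<in> V \<Longrightarrow> p1 a ^2 + p2 a ^2 = r^2"
    using sph unfolding p1_def p2_def by (auto simp: edist_2)
  have dot: "\<And>a. a \<in> V \<Longrightarrow> E v a \<Longrightarrow> p1 v * p1 a + p2 v * p2 a = (2 * r^2 - 1) / 2"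
    by (rule dot_eq_if_concyclic_unit_distance) (use circle vs(1) unit in auto)
  have "p1 v ^2 + p2 v ^2 \<noteq> 0"
  proof
    assume "p1 v ^2 + p2 v ^2 = 0"
    then show False
      using circle[OF vs(1)] circle[OF vs(2)] unit[OF vs(2) e(1)] by simp
  qed
  from two_of_three_eq_if_same_norm_and_dot[OF this dot[OF vs(2) e(1)] dot[OF vs(3) e(2)]
      dot[OF vs(4) e(3)] circle[OF vs(2)] circle[OF vs(3)] circle[OF vs(4)]]
  have "f x = f y \<or> f x = f z \<or> f y = f z"
    using euclid_2_eqI fe vs unfolding p1_def p2_def by (smt (verit) image_subset_iff)
  then show ?thesis using inj vs by (auto simp: inj_on_def)
qed

lemma spherical_embedding_four_vertices_degree_le_2:
  assumes card: "card V = 4"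
    and inside: "\<forall>u v. E u v \<longrightarrow> u \<in> V \<and> v \<in> V"
    and sym: "\<forall>u v. E u v \<longrightarrow> E v u"
    and irrefl: "\<forall>v. \<not> E v v"
    and deg: "\<forall>v\<in>V. \<forall>x\<in>V. \<forall>y\<in>V. \<forall>z\<in>V.
      E v x \<and> E v y \<and> E v z \<longrightarrow> x = y \<or> x = z \<or> y = z"
  shows "\<exists>r \<le> sqrt 2 / 2. spherical_embedding V E 2 r"
proof -
  obtain a b c d where dist: "distinct [a, b, c, d]" and V: "V = {a, b, c, d}"
    using card by (auto simp: card_Suc_eq numeral_eq_Suc)
  have isolated: "\<forall>x. \<not> E w x \<and> \<not> E x w" if "\<forall>x\<in>V. \<not> E w x" for w
    using that inside sym by blast
  have "\<not> (E a b \<and> E a c \<and> E a d)" "\<not> (E b a \<and> E b c \<and> E b d)"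
       "\<not> (E c a \<and> E c b \<and> E c d)" "\<not> (E d a \<and> E d b \<and> E d c)"
    using deg dist unfolding V by auto
  \<comment> \<open>If each of the three perfect matchings contains an edge, one edge from each forms
    either a triangle, whose fourth vertex is then isolated, or a star with a vertex of
    degree 3.\<close>
  then consider w where "w \<in> V" "\<forall>x. \<not> E w x \<and> \<not> E x w"
    | "\<not> E a c" "\<not> E b d" | "\<not> E a d" "\<not> E b c" | "\<not> E a b" "\<not> E c d"
    using isolated sym irrefl unfolding V by blast
  then show ?thesis
  proof cases
    case (1 w)
    have "sqrt 3 / 3 \<le> sqrt 2 / (2::real)"
      by (rule power2_le_imp_le) (simp_all add: power_divide)
    then show ?thesis
      using spherical_embedding_triangle_plus_isolated[OF card 1 irrefl] by blast
  next
    case 2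
    have "spherical_embedding V E 2 (sqrt 2 / 2)"
      by (rule spherical_embedding_subgraph_of_square[of a b c d])
        (use 2 dist sym irrefl in \<open>auto simp: V\<close>)
    then show ?thesis by blast
  next
    case 3
    have "spherical_embedding V E 2 (sqrt 2 / 2)"
      by (rule spherical_embedding_subgraph_of_square[of a b d c])
        (use 3 dist sym irrefl in \<open>auto simp: V\<close>)
    then show ?thesis by blast
  next
    case 4
    have "spherical_embedding V E 2 (sqrt 2 / 2)"
      by (rule spherical_embedding_subgraph_of_square[of a c b d])
        (use 4 dist sym irrefl in \<open>auto simp: V\<close>)
    then show ?thesis by blast
  qed
qed

lemma spherical_embedding_sdim:
  assumes "\<exists>k r. r < 1 \<and> spherical_embedding V E k r"
  shows "\<exists>r<1. spherical_embedding V E (sdim V E) r"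
  unfolding sdim_def by (rule LeastI_ex) (use assms in blast)

lemma R_G_le:
  assumes "V \<noteq> {}" "r < 1" "spherical_embedding V E (sdim V E) r"
  shows "R_G V E \<le> r"
  unfolding R_G_def
proof (rule cInf_lower)
  show "r \<in> {r. r < 1 \<and> spherical_embedding V E (sdim V E) r}" using assms(2,3) by simp
  show "bdd_below {r. r < 1 \<and> spherical_embedding V E (sdim V E) r}"
  proof (rule bdd_belowI)
    fix s assume "s \<in> {r. r < 1 \<and> spherical_embedding V E (sdim V E) r}"
    then obtain f c where "\<forall>v\<in>V. edist (sdim V E) (f v) c = s"
      unfolding spherical_embedding_def by auto
    moreover obtain v where "v \<in> V" using assms(1) by blast
    ultimately have "s = edist (sdim V E) (f v) c" by simp
    then show "0 \<le> s" by (simp add: edist_def sum_nonneg)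
  qed
qed

theorem mainTheorem14:
  fixes V :: "'a set" and E :: "'a \<Rightarrow> 'a \<Rightarrow> bool"
  assumes "card V = 4"
    and "\<forall>u v. E u v \<longrightarrow> u \<in> V \<and> v \<in> V"
    and "\<forall>u v. E u v \<longrightarrow> E v u"
    and "\<forall>v. \<not> E v v"
    and "\<exists>k r. r < 1 \<and> spherical_embedding V E k r"
    and "sdim V E = 2"
  shows "R_G V E \<le> sqrt 2 / 2"
proof -
  obtain f c r where f: "unit_distance_embedding V E 2 f"
    and on_sphere: "\<forall>v\<in>V. edist 2 (f v) c = r"
    using spherical_embedding_sdim[OF assms(5)] assms(6) unfolding spherical_embedding_def by auto
  have "\<forall>v\<in>V. \<forall>x\<in>V. \<forall>y\<in>V. \<forall>z\<in>V.
      E v x \<and> E v y \<and> E v z \<longrightarrow> x = y \<or> x = z \<or> y = z"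
    using unit_distance_embedding_on_circle_degree_le_2[OF f on_sphere] by blast
  then obtain r' where r': "r' \<le> sqrt 2 / 2" "spherical_embedding V E 2 r'"
    using spherical_embedding_four_vertices_degree_le_2[OF assms(1-4)] by blast
  have "V \<noteq> {}" using assms(1) by auto
  moreover have "r' < 1"
    using r'(1) power2_less_imp_less[of "sqrt 2 / 2" 1] by (simp add: power_divide)
  moreover have "spherical_embedding V E (sdim V E) r'" using r'(2) assms(6) by simp
  ultimately have "R_G V E \<le> r'" by (rule R_G_le)
  with r' show ?thesis by simp
qed

end
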